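(* Let $G$ be a graph of order $n \ge 3$. Suppose that for every vertex $v \in V(G)$ and for all $u \in N(v)$ we have $\deg_{\langle N(v)\rangle}(u) \ge \deg_G(v)/2$. Then $G$ is hamiltonian and $\{1,2\}$-extendable.
   Context: $N(v)$ denotes the open neighbourhood of $v$ and $\langle X\rangle$ the subgraph of $G$ induced by $X \subseteq V(G)$. A graph $G$ is $\{1,2\}$-extendable if for every non-hamiltonian cycle $C$ of $G$ there exists a cycle $C'$ of length $|C|+1$ or $|C|+2$ whose vertex set contains all vertices of $C$. *)

theory Defs
  imports Main
begin

definition simple_graph :: "'a set \<Rightarrow> ('a \<Rightarrow> 'a \<Rightarrow> bool) \<Rightarrow> bool" where
  "simple_graph V E \<longleftrightarrow> finite V \<and> (\<forall>u v. E u v \<longrightarrow> u \<in> V \<and> v \<in> V)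
     \<and> (\<forall>u v. E u v \<longrightarrow> E v u) \<and> (\<forall>u. \<not> E u u)"

definition connected_graph :: "'a set \<Rightarrow> ('a \<Rightarrow> 'a \<Rightarrow> bool) \<Rightarrow> bool" where
  "connected_graph V E \<longleftrightarrow> (\<forall>u\<in>V. \<forall>v\<in>V. (u, v) \<in> {(x, y). E x y}\<^sup>*)"

definition nbhd :: "'a set \<Rightarrow> ('a \<Rightarrow> 'a \<Rightarrow> bool) \<Rightarrow> 'a \<Rightarrow> 'a set" where
  "nbhd V E v = {u \<in> V. E v u}"

definition degree :: "'a set \<Rightarrow> ('a \<Rightarrow> 'a \<Rightarrow> bool) \<Rightarrow> 'a \<Rightarrow> nat" where
  "degree V E v = card (nbhd V E v)"

definition induced_degree :: "'a set \<Rightarrow> ('a \<Rightarrow> 'a \<Rightarrow> bool) \<Rightarrow> 'a set \<Rightarrow> 'a \<Rightarrow> nat" where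
  "induced_degree V E X u = card {w \<in> X. E u w}"

definition is_cycle :: "'a set \<Rightarrow> ('a \<Rightarrow> 'a \<Rightarrow> bool) \<Rightarrow> 'a list \<Rightarrow> bool" where
  "is_cycle V E cs \<longleftrightarrow> length cs \<ge> 3 \<and> distinct cs \<and> set cs \<subseteq> V
     \<and> (\<forall>i < length cs. E (cs ! i) (cs ! ((i + 1) mod length cs)))"

definition hamiltonian :: "'a set \<Rightarrow> ('a \<Rightarrow> 'a \<Rightarrow> bool) \<Rightarrow> bool" where
  "hamiltonian V E \<longleftrightarrow> (\<exists>cs. is_cycle V E cs \<and> set cs = V)"

definition extendable_12 :: "'a set \<Rightarrow> ('a \<Rightarrow> 'a \<Rightarrow> bool) \<Rightarrow> bool" where
  "extendable_12 V E \<longleftrightarrow> (\<forall>C. is_cycle V E C \<and> set C \<noteq> V \<longrightarrow>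
     (\<exists>C'. is_cycle V E C' \<and> (length C' = length C + 1 \<or> length C' = length C + 2)
           \<and> set C \<subseteq> set C'))"

end

(*
  Let C be a non-hamiltonian cycle, y a vertex off C with a neighbour on C (connectivity),
  A the set of neighbours of y on C, and a+ the successor of a on C.  If C cannot be
  extended by one or two vertices, then y is adjacent to no a+, the vertices a+ (a in A)
  are pairwise non-adjacent (otherwise reverse a segment of C), and no vertex off C is a
  common neighbour of y and a+.  For b in A, the local condition at b, applied to its
  neighbours y and b+, says that N(b) contains no more common non-neighbours of y and b+
  than common neighbours.  The common neighbours are the a in A adjacent to b and b+; the
  common non-neighbours include y, b+ and every a+ with a in A adjacent to b and a+ to b.
  Summing over b in A, both counts enumerate the same pairs, yet the inequalities add up
  to a surplus of 2|A| > 0.  Hamiltonicity follows: an edge of a locally Dirac graph lies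
  in a triangle, and a longest cycle cannot be extended.
*)

theory Submission
  imports Defs
begin

section \<open>Cycles as lists\<close>

lemma successively_iff_nth:
  "successively P xs \<longleftrightarrow> (\<forall>i. Suc i < length xs \<longrightarrow> P (xs ! i) (xs ! Suc i))"
  by (induction P xs rule: successively.induct) (auto simp: nth_Cons split: nat.split)

lemma is_cycle_iff_successively:
  "is_cycle V E C \<longleftrightarrow>
     3 \<le> length C \<and> distinct C \<and> set C \<subseteq> V \<and> successively E C \<and> E (last C) (hd C)"
proof -
  have "(\<forall>i < length C. E (C ! i) (C ! ((i + 1) mod length C))) \<longleftrightarrow>
          successively E C \<and> E (last C) (hd C)" if "length C = Suc m" for m
  proof -
    have "C \<noteq> []"
      using that by auto
    have "Suc i mod Suc m = Suc i" if "i < m" for i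
      using that by simp
    then have "(\<forall>i < Suc m. E (C ! i) (C ! (Suc i mod Suc m))) \<longleftrightarrow>
            (\<forall>i < m. E (C ! i) (C ! Suc i)) \<and> E (C ! m) (C ! 0)"
      by (auto simp: less_Suc_eq)
    then show ?thesis
      using that \<open>C \<noteq> []\<close> by (simp add: successively_iff_nth last_conv_nth hd_conv_nth)
  qed
  then show ?thesis
    unfolding is_cycle_def by (cases "length C") auto
qed

text \<open>Only meaningful for distinct \<open>C\<close> and \<open>a \<in> set C\<close>.\<close>
definition cycle_succ :: "'a list \<Rightarrow> 'a \<Rightarrow> 'a" where
  "cycle_succ C a = C ! (Suc (THE i. i < length C \<and> C ! i = a) mod length C)"

lemma cycle_succ_nth:
  assumes "distinct C" "i < length C"
  shows "cycle_succ C (C ! i) = C ! (Suc i mod length C)"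
proof -
  have "(THE j. j < length C \<and> C ! j = C ! i) = i"
    using assms by (auto simp: nth_eq_iff_index_eq)
  then show ?thesis by (simp add: cycle_succ_def)
qed

lemma cycle_succ_in_set: "distinct C \<Longrightarrow> a \<in> set C \<Longrightarrow> cycle_succ C a \<in> set C"
  by (metis cycle_succ_nth in_set_conv_nth length_pos_if_in_set mod_less_divisor nth_mem)

lemma inj_on_cycle_succ:
  assumes "distinct C"
  shows "inj_on (cycle_succ C) (set C)"
proof (rule inj_onI)
  fix a b assume "a \<in> set C" "b \<in> set C" and eq: "cycle_succ C a = cycle_succ C b"
  then obtain i j where ij: "i < length C" "j < length C" "a = C ! i" "b = C ! j"
    by (auto simp: in_set_conv_nth)
  moreover have "Suc i mod length C < length C" "Suc j mod length C < length C"
    using ij(1,2) by (auto intro: mod_less_divisor)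
  ultimately have "Suc i mod length C = Suc j mod length C"
    using eq assms by (simp add: cycle_succ_nth nth_eq_iff_index_eq)
  then have "i = j"
    using ij by (auto simp: mod_Suc split: if_splits)
  then show "a = b" using ij by simp
qed

lemma cycle_succ_rotate:
  assumes "distinct C" "a \<in> set C"
  shows "cycle_succ (rotate k C) a = cycle_succ C a"
proof -
  have n: "0 < length C" using assms(2) by auto
  obtain i where i: "i < length C" "a = rotate k C ! i"
    using assms(2) by (metis in_set_conv_nth length_rotate set_rotate)
  have "cycle_succ (rotate k C) a = rotate k C ! (Suc i mod length C)"
    using assms(1) i by (simp add: cycle_succ_nth)
  also have "\<dots> = C ! ((k + Suc i mod length C) mod length C)"
    using n by (simp add: nth_rotate)
  also have "(k + Suc i mod length C) mod length C = Suc ((k + i) mod length C) mod length C"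
    by (simp add: mod_add_right_eq mod_Suc_eq)
  also have "C ! \<dots> = cycle_succ C (C ! ((k + i) mod length C))"
    using assms(1) n by (simp add: cycle_succ_nth)
  also have "C ! ((k + i) mod length C) = a"
    using i n by (simp add: nth_rotate)
  finally show ?thesis .
qed

lemma cycle_succ_append:
  assumes "distinct (xs @ ys)" "xs \<noteq> []" "ys \<noteq> []"
  shows "cycle_succ (xs @ ys) (last xs) = hd ys"
proof -
  have "last xs = (xs @ ys) ! (length xs - 1)" "hd ys = (xs @ ys) ! length xs"
    using assms(2,3) by (simp_all add: last_conv_nth hd_conv_nth nth_append)
  moreover have "Suc (length xs - 1) mod length (xs @ ys) = length xs"
    using assms(2,3) by simp
  moreover have "cycle_succ (xs @ ys) ((xs @ ys) ! (length xs - 1))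
      = (xs @ ys) ! (Suc (length xs - 1) mod length (xs @ ys))"
    using assms(1) by (rule cycle_succ_nth) (use assms(3) in \<open>cases ys; simp\<close>)
  ultimately show ?thesis by simp
qed

lemma cycle_succ_last:
  assumes "distinct C" "C \<noteq> []"
  shows "cycle_succ C (last C) = hd C"
  using assms cycle_succ_nth[of C "length C - 1"] by (simp add: last_conv_nth hd_conv_nth)

lemma is_cycle_iff_cycle_succ:
  "is_cycle V E C \<longleftrightarrow>
     3 \<le> length C \<and> distinct C \<and> set C \<subseteq> V \<and> (\<forall>a \<in> set C. E a (cycle_succ C a))"
  unfolding is_cycle_def by (auto simp: all_set_conv_all_nth cycle_succ_nth)

lemma is_cycle_adj_cycle_succ: "is_cycle V E C \<Longrightarrow> a \<in> set C \<Longrightarrow> E a (cycle_succ C a)"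
  by (simp add: is_cycle_iff_cycle_succ)

lemma is_cycle_rotate: "is_cycle V E C \<Longrightarrow> is_cycle V E (rotate k C)"
  by (simp add: is_cycle_iff_cycle_succ cycle_succ_rotate)

lemma ex_rotate_last: "a \<in> set xs \<Longrightarrow> \<exists>k. rotate k xs \<noteq> [] \<and> last (rotate k xs) = a"
proof -
  assume "a \<in> set xs"
  then obtain p q where "xs = p @ a # q" by (meson split_list)
  then have "rotate (Suc (length p)) xs = q @ p @ [a]"
    by (simp add: rotate_append rotate_Suc)
  then have "rotate (Suc (length p)) xs \<noteq> [] \<and> last (rotate (Suc (length p)) xs) = a"
    by simp
  then show ?thesis ..
qed

lemma is_cycle_append_path:
  assumes "is_cycle V E C" "ys \<noteq> []" "distinct ys" "set ys \<subseteq> V - set C" "successively E ys"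
    and "E (last C) (hd ys)" "E (last ys) (hd C)"
  shows "is_cycle V E (ys @ C)"
proof -
  have "C \<noteq> []"
    using assms(1) by (auto simp: is_cycle_def)
  then show ?thesis
    using assms by (auto simp: is_cycle_iff_successively successively_append_iff)
qed

lemma is_cycle_reverse_segment:
  assumes sym: "\<And>u v. E u v \<Longrightarrow> E v u"
    and cycle: "is_cycle V E (xs @ ys)" and "xs \<noteq> []" "ys \<noteq> []"
    and y: "y \<in> V" "y \<notin> set (xs @ ys)"
    and "E y (last xs)" "E (last ys) y" "E (hd xs) (hd ys)"
  shows "is_cycle V E (y # rev xs @ ys)"
proof -
  have "successively E xs"
    using cycle by (simp add: is_cycle_iff_successively successively_append_iff)
  then have "successively E (rev xs)"
    by (simp add: successively_mono sym)
  then show ?thesis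
    using assms by (auto simp: is_cycle_iff_successively successively_append_iff successively_Cons
        hd_rev last_rev)
qed

section \<open>Extending a cycle\<close>

lemma cycle_extension_by_path:
  assumes C: "is_cycle V E C" and a: "a \<in> set C"
    and ys: "ys \<noteq> []" "distinct ys" "set ys \<subseteq> V - set C" "successively E ys"
    and "E a (hd ys)" "E (last ys) (cycle_succ C a)"
  shows "\<exists>C'. is_cycle V E C' \<and> length C' = length C + length ys \<and> set C \<subseteq> set C'"
proof -
  obtain k where k: "rotate k C \<noteq> []" "last (rotate k C) = a"
    using ex_rotate_last[OF a] by blast
  have "distinct C"
    using C by (simp add: is_cycle_def)
  then have "hd (rotate k C) = cycle_succ C a"
    using k a by (metis cycle_succ_last cycle_succ_rotate distinct_rotate)
  then have "is_cycle V E (ys @ rotate k C)"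
    using assms k by (intro is_cycle_append_path is_cycle_rotate) auto
  then show ?thesis
    by (intro exI[of _ "ys @ rotate k C"]) auto
qed

lemma cycle_extension_by_crossing:
  assumes sym: "\<And>u v. E u v \<Longrightarrow> E v u"
    and C: "is_cycle V E C" and ab: "a \<in> set C" "b \<in> set C" "a \<noteq> b"
    and y: "y \<in> V" "y \<notin> set C" "E y a" "E y b"
    and cross: "E (cycle_succ C a) (cycle_succ C b)"
  shows "\<exists>C'. is_cycle V E C' \<and> length C' = length C + 1 \<and> set C \<subseteq> set C'"
proof -
  obtain k where k: "rotate k C \<noteq> []" "last (rotate k C) = a"
    using ex_rotate_last[OF ab(1)] by blast
  define D where "D = rotate k C"
  have "is_cycle V E D"
    using C by (simp add: D_def is_cycle_rotate)
  then have D: "is_cycle V E D" "distinct D" "set D = set C" "length D = length C"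
    by (auto simp: D_def is_cycle_def)
  obtain p q where pq: "D = p @ b # q"
    using ab(2) D(3) by (metis split_list)
  define xs where "xs = p @ [b]"
  have "q \<noteq> []"
    using pq k ab(3) by (auto simp: D_def)
  have split: "D = xs @ q" "xs \<noteq> []" "last xs = b" "last q = a"
    using pq k \<open>q \<noteq> []\<close> by (auto simp: xs_def D_def)
  have succ_D: "cycle_succ D c = cycle_succ C c" if "c \<in> set C" for c
    using C that by (simp add: D_def cycle_succ_rotate is_cycle_def)
  have "hd xs = cycle_succ C a"
    using cycle_succ_last[OF D(2)] split \<open>q \<noteq> []\<close> succ_D[OF ab(1)] by simp
  moreover have "hd q = cycle_succ C b"
    using cycle_succ_append[of xs q] D(2) split \<open>q \<noteq> []\<close> succ_D[OF ab(2)] by simp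
  ultimately have "is_cycle V E (y # rev xs @ q)"
    using D split \<open>q \<noteq> []\<close> y cross sym by (intro is_cycle_reverse_segment) auto
  moreover have "length (y # rev xs @ q) = length C + 1" "set C \<subseteq> set (y # rev xs @ q)"
    using split D(3,4) by auto
  ultimately show ?thesis
    by blast
qed

section \<open>Locally Dirac graphs\<close>

lemma simple_graphD:
  assumes "simple_graph V E"
  shows "finite V" "E u v \<Longrightarrow> u \<in> V" "E u v \<Longrightarrow> v \<in> V" "E u v \<Longrightarrow> E v u" "\<not> E u u"
  using assms by (auto simp: simple_graph_def)

lemma connected_graph_edge_leaving:
  assumes "connected_graph V E" "x \<in> S" "S \<subseteq> V" "v \<in> V" "v \<notin> S"
  shows "\<exists>u \<in> S. \<exists>w. w \<notin> S \<and> E u w"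
proof -
  have "(x, v) \<in> {(u, w). E u w}\<^sup>*"
    using assms unfolding connected_graph_def by auto
  then show ?thesis
    using assms(2,5) by (induction rule: rtrancl_induct) auto
qed

text \<open>The hypothesis \<open>deg\<^bsub>\<langle>N(v)\<rangle>\<^esub>(u) \<ge> deg(v)/2\<close> of the theorem, cleared of the fraction.\<close>
definition locally_dirac :: "'a set \<Rightarrow> ('a \<Rightarrow> 'a \<Rightarrow> bool) \<Rightarrow> bool" where
  "locally_dirac V E \<longleftrightarrow>
     (\<forall>v \<in> V. \<forall>u \<in> nbhd V E v. degree V E v \<le> 2 * induced_degree V E (nbhd V E v) u)"

lemma card_nonnbrs_le_common_nbrs:
  assumes G: "simple_graph V E" and "locally_dirac V E" and "E b y" "E b z"
  shows "card {w \<in> nbhd V E b. \<not> E y w \<and> \<not> E z w} \<le> card {w \<in> nbhd V E b. E y w \<and> E z w}"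
proof -
  define X where "X = nbhd V E b"
  define Ny where "Ny = {w \<in> X. E y w}"
  define Nz where "Nz = {w \<in> X. E z w}"
  have "finite X"
    using simple_graphD(1)[OF G] by (simp add: X_def nbhd_def)
  have "y \<in> X" "z \<in> X" "b \<in> V"
    using assms(3,4) simple_graphD[OF G] by (auto simp: X_def nbhd_def)
  then have "card X \<le> 2 * card Ny" "card X \<le> 2 * card Nz"
    using assms(2) by (auto simp: locally_dirac_def degree_def induced_degree_def X_def Ny_def Nz_def)
  moreover have "card (X - (Ny \<union> Nz)) = card X - card (Ny \<union> Nz)" "card (Ny \<union> Nz) \<le> card X"
    using \<open>finite X\<close> by (auto simp: Ny_def Nz_def intro: card_Diff_subset card_mono)
  moreover have "card Ny + card Nz = card (Ny \<union> Nz) + card (Ny \<inter> Nz)"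
    using \<open>finite X\<close> by (intro card_Un_Int) (auto simp: Ny_def Nz_def)
  ultimately have "card (X - (Ny \<union> Nz)) \<le> card (Ny \<inter> Nz)"
    by linarith
  moreover have "X - (Ny \<union> Nz) = {w \<in> nbhd V E b. \<not> E y w \<and> \<not> E z w}"
    "Ny \<inter> Nz = {w \<in> nbhd V E b. E y w \<and> E z w}"
    by (auto simp: X_def Ny_def Nz_def)
  ultimately show ?thesis
    by simp
qed

lemma sum_card_filter_swap:
  assumes "finite A"
  shows "(\<Sum>b \<in> A. card {a \<in> A. P b a}) = (\<Sum>a \<in> A. card {b \<in> A. P b a})"
proof -
  have card_eq: "card {a \<in> A. Q a} = (\<Sum>a \<in> A. if Q a then 1 else 0)" for Q
    using assms by (simp add: sum.inter_filter[symmetric])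
  show ?thesis
    unfolding card_eq by (rule sum.swap)
qed

section \<open>A cycle that cannot be extended\<close>

locale stuck_cycle =
  fixes V :: "'a set" and E :: "'a \<Rightarrow> 'a \<Rightarrow> bool" and C :: "'a list" and y :: 'a
  assumes graph: "simple_graph V E" and cycle: "is_cycle V E C"
    and y: "y \<in> V" "y \<notin> set C"
    and stuck: "\<nexists>C'. is_cycle V E C' \<and> (length C' = length C + 1 \<or> length C' = length C + 2)
                   \<and> set C \<subseteq> set C'"
begin

abbreviation nxt :: "'a \<Rightarrow> 'a" where
  "nxt \<equiv> cycle_succ C"

definition y_nbrs :: "'a set" where
  "y_nbrs = {a \<in> set C. E y a}"

lemmas sym = simple_graphD(4)[OF graph] and irrefl = simple_graphD(5)[OF graph]
  and in_V = simple_graphD(2,3)[OF graph]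

lemma adj_commute: "E u v \<longleftrightarrow> E v u"
  using sym by blast

lemma distinct: "distinct C"
  using cycle by (simp add: is_cycle_def)

lemma nxt_in_set: "a \<in> set C \<Longrightarrow> nxt a \<in> set C"
  using distinct by (rule cycle_succ_in_set)

lemma y_nonadj_nxt:
  assumes "a \<in> y_nbrs"
  shows "\<not> E y (nxt a)"
proof
  assume "E y (nxt a)"
  then have "\<exists>C'. is_cycle V E C' \<and> length C' = length C + length [y] \<and> set C \<subseteq> set C'"
    using assms y by (intro cycle_extension_by_path[OF cycle]) (auto simp: y_nbrs_def sym)
  then show False
    using stuck by auto
qed

lemma nxt_nonadj_nxt:
  assumes "a \<in> y_nbrs" "b \<in> y_nbrs" "a \<noteq> b"
  shows "\<not> E (nxt a) (nxt b)"
proof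
  assume "E (nxt a) (nxt b)"
  then have "\<exists>C'. is_cycle V E C' \<and> length C' = length C + 1 \<and> set C \<subseteq> set C'"
    using assms y by (intro cycle_extension_by_crossing[OF sym cycle]) (auto simp: y_nbrs_def)
  then show False
    using stuck by auto
qed

lemma outside_nonadj_nxt:
  assumes "a \<in> y_nbrs" "E y z" "z \<notin> set C"
  shows "\<not> E z (nxt a)"
proof
  assume "E z (nxt a)"
  moreover have "z \<noteq> y" "z \<in> V"
    using assms(2) irrefl in_V by auto
  ultimately have "\<exists>C'. is_cycle V E C' \<and> length C' = length C + length [y, z] \<and> set C \<subseteq> set C'"
    using assms y by (intro cycle_extension_by_path[OF cycle]) (auto simp: y_nbrs_def sym)
  then show False
    using stuck by auto
qed

lemma common_nbrs_subset:
  assumes "b \<in> y_nbrs"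
  shows "{w \<in> nbhd V E b. E y w \<and> E (nxt b) w} \<subseteq> {a \<in> y_nbrs. E b a \<and> E (nxt b) a}"
proof
  fix w assume w: "w \<in> {w \<in> nbhd V E b. E y w \<and> E (nxt b) w}"
  then have "w \<in> set C"
    using outside_nonadj_nxt[OF assms] sym by blast
  then show "w \<in> {a \<in> y_nbrs. E b a \<and> E (nxt b) a}"
    using w by (auto simp: y_nbrs_def nbhd_def)
qed

lemma nonnbrs_superset:
  assumes "b \<in> y_nbrs"
  shows "insert y (insert (nxt b) (nxt ` {a \<in> y_nbrs. E b a \<and> E (nxt a) b}))
           \<subseteq> {w \<in> nbhd V E b. \<not> E y w \<and> \<not> E (nxt b) w}"
proof -
  have b: "b \<in> set C" "E b y" "E b (nxt b)"
    using assms sym is_cycle_adj_cycle_succ[OF cycle] by (auto simp: y_nbrs_def)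
  have "nxt a \<in> {w \<in> nbhd V E b. \<not> E y w \<and> \<not> E (nxt b) w}"
    if "a \<in> y_nbrs" "E b a" "E (nxt a) b" for a
  proof -
    have "a \<noteq> b"
      using that(2) irrefl by auto
    then show ?thesis
      using that assms y_nonadj_nxt nxt_nonadj_nxt in_V sym by (auto simp: nbhd_def)
  qed
  moreover have "y \<in> {w \<in> nbhd V E b. \<not> E y w \<and> \<not> E (nxt b) w}"
    using b assms y_nonadj_nxt irrefl sym y by (auto simp: nbhd_def)
  moreover have "nxt b \<in> {w \<in> nbhd V E b. \<not> E y w \<and> \<not> E (nxt b) w}"
    using b assms y_nonadj_nxt irrefl in_V by (auto simp: nbhd_def)
  ultimately show ?thesis
    by blast
qed

lemma card_nonnbrs_lower_bound:
  assumes "b \<in> y_nbrs"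
  shows "card {a \<in> y_nbrs. E b a \<and> E (nxt a) b} + 2
           \<le> card {w \<in> nbhd V E b. \<not> E y w \<and> \<not> E (nxt b) w}"
proof -
  define Ext where "Ext = {a \<in> y_nbrs. E b a \<and> E (nxt a) b}"
  have Ext: "Ext \<subseteq> set C" "b \<notin> Ext"
    using irrefl by (auto simp: Ext_def y_nbrs_def)
  have "b \<in> set C"
    using assms by (simp add: y_nbrs_def)
  then have "nxt b \<notin> nxt ` Ext" "y \<notin> insert (nxt b) (nxt ` Ext)"
    using Ext y nxt_in_set inj_on_cycle_succ[OF distinct] by (auto dest: inj_onD)
  moreover have "card (nxt ` Ext) = card Ext"
    using Ext inj_on_cycle_succ[OF distinct] by (auto intro: card_image inj_on_subset)
  ultimately have "card (insert y (insert (nxt b) (nxt ` Ext))) = card Ext + 2"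
    by (simp add: Ext_def y_nbrs_def)
  moreover have "finite (nbhd V E b)"
    using simple_graphD(1)[OF graph] by (simp add: nbhd_def)
  then have "card (insert y (insert (nxt b) (nxt ` Ext)))
               \<le> card {w \<in> nbhd V E b. \<not> E y w \<and> \<not> E (nxt b) w}"
    using nonnbrs_superset[OF assms] unfolding Ext_def by (intro card_mono) auto
  ultimately show ?thesis
    by (simp add: Ext_def)
qed

lemma not_locally_dirac:
  assumes "y_nbrs \<noteq> {}"
  shows "\<not> locally_dirac V E"
proof
  assume LD: "locally_dirac V E"
  define S where "S b = card {a \<in> y_nbrs. E b a \<and> E (nxt a) b}" for b
  define T where "T b = card {a \<in> y_nbrs. E b a \<and> E (nxt b) a}" for b
  have fin: "finite y_nbrs"
    by (simp add: y_nbrs_def)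
  have "S b + 2 \<le> T b" if b: "b \<in> y_nbrs" for b
  proof -
    have "E b y" "E b (nxt b)"
      using b is_cycle_adj_cycle_succ[OF cycle] by (auto simp: y_nbrs_def adj_commute)
    then have "card {w \<in> nbhd V E b. \<not> E y w \<and> \<not> E (nxt b) w}
                 \<le> card {w \<in> nbhd V E b. E y w \<and> E (nxt b) w}"
      by (rule card_nonnbrs_le_common_nbrs[OF graph LD])
    also have "\<dots> \<le> T b"
      unfolding T_def using fin by (intro card_mono common_nbrs_subset b) auto
    finally show ?thesis
      using card_nonnbrs_lower_bound[OF b] unfolding S_def by linarith
  qed
  then have "(\<Sum>b \<in> y_nbrs. S b + 2) \<le> (\<Sum>b \<in> y_nbrs. T b)"
    by (rule sum_mono)
  moreover have "(\<Sum>b \<in> y_nbrs. S b + 2) = (\<Sum>b \<in> y_nbrs. S b) + 2 * card y_nbrs"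
    by (simp only: sum.distrib sum_constant) simp
  moreover have "(\<Sum>b \<in> y_nbrs. T b) = (\<Sum>b \<in> y_nbrs. S b)"
    \<comment> \<open>both sides count the pairs \<open>(a, b)\<close> of adjacent vertices of \<open>y_nbrs\<close> with \<open>E (nxt a) b\<close>\<close>
  proof -
    have "(\<Sum>b \<in> y_nbrs. T b) = (\<Sum>a \<in> y_nbrs. card {b \<in> y_nbrs. E b a \<and> E (nxt b) a})"
      unfolding T_def by (rule sum_card_filter_swap[OF fin])
    then show ?thesis
      unfolding S_def by (simp add: adj_commute)
  qed
  moreover have "card y_nbrs > 0"
    using assms fin by (simp add: card_gt_0_iff)
  ultimately show False
    by linarith
qed

end

lemma locally_dirac_cycle_extension:
  assumes G: "simple_graph V E" and "connected_graph V E" "locally_dirac V E"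
    and C: "is_cycle V E C" "set C \<noteq> V"
  shows "\<exists>C'. is_cycle V E C' \<and> (length C' = length C + 1 \<or> length C' = length C + 2)
               \<and> set C \<subseteq> set C'"
proof (rule ccontr)
  assume stuck: "\<not> ?thesis"
  have "set C \<subseteq> V"
    using C(1) by (simp add: is_cycle_def)
  obtain x\<^sub>0 v where "x\<^sub>0 \<in> set C" "v \<in> V" "v \<notin> set C"
    using C by (cases C) (auto simp: is_cycle_def)
  then obtain x y where "x \<in> set C" "y \<notin> set C" "E x y"
    using connected_graph_edge_leaving[OF assms(2) _ \<open>set C \<subseteq> V\<close>] by blast
  moreover have "y \<in> V"
    using simple_graphD(3)[OF G \<open>E x y\<close>] .
  ultimately interpret stuck_cycle V E C y
    using G C(1) stuck by unfold_locales simp_all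
  have "x \<in> y_nbrs"
    using \<open>x \<in> set C\<close> \<open>E x y\<close> sym by (simp add: y_nbrs_def)
  then show False
    using not_locally_dirac assms(3) by blast
qed

lemma locally_dirac_triangle:
  assumes G: "simple_graph V E" and "locally_dirac V E" "E u w"
  shows "\<exists>t. is_cycle V E [u, w, t]"
proof -
  have uw: "u \<in> V" "w \<in> nbhd V E u"
    using assms(3) simple_graphD[OF G] by (auto simp: nbhd_def)
  moreover have "finite (nbhd V E u)"
    using simple_graphD(1)[OF G] by (simp add: nbhd_def)
  ultimately have "0 < degree V E u"
    by (auto simp: degree_def card_gt_0_iff)
  then have "0 < induced_degree V E (nbhd V E u) w"
    using assms(2) uw unfolding locally_dirac_def by fastforce
  then obtain t where "t \<in> nbhd V E u" "E w t"
    by (auto simp: induced_degree_def card_gt_0_iff)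
  then show ?thesis
    using assms(3) simple_graphD[OF G]
    by (intro exI[of _ t]) (auto simp: is_cycle_iff_successively nbhd_def)
qed

lemma hamiltonian_if_extendable_12:
  assumes "finite V" "extendable_12 V E" "is_cycle V E C\<^sub>0"
  shows "hamiltonian V E"
proof -
  have "\<forall>C. is_cycle V E C \<longrightarrow> length C < card V + 1"
  proof (intro allI impI)
    fix C assume "is_cycle V E C"
    then have "distinct C" "set C \<subseteq> V"
      by (auto simp: is_cycle_def)
    then have "length C \<le> card V"
      using card_mono[OF assms(1)] by (fastforce simp flip: distinct_card)
    then show "length C < card V + 1"
      by simp
  qed
  then obtain C where C: "is_cycle V E C" and longest: "\<forall>C'. is_cycle V E C' \<longrightarrow> length C' \<le> length C"
    using Lattices_Big.ex_has_greatest_nat[of "is_cycle V E", OF assms(3)] by blast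
  have "set C = V"
  proof (rule ccontr)
    assume "set C \<noteq> V"
    then obtain C' where "is_cycle V E C'" "length C' = length C + 1 \<or> length C' = length C + 2"
      using assms(2) C unfolding extendable_12_def by blast
    then show False
      using longest by force
  qed
  then show ?thesis
    using C by (auto simp: hamiltonian_def)
qed

theorem mainTheorem2:
  fixes V :: "'a set" and E :: "'a \<Rightarrow> 'a \<Rightarrow> bool"
  assumes "simple_graph V E"
    and "connected_graph V E"
    and "card V \<ge> 3"
    and "\<forall>v\<in>V. \<forall>u\<in>nbhd V E v.
           2 * induced_degree V E (nbhd V E v) u \<ge> degree V E v"
  shows "hamiltonian V E \<and> extendable_12 V E"
proof -
  have LD: "locally_dirac V E"
    using assms(4) by (simp add: locally_dirac_def)
  have ext: "extendable_12 V E"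
    using locally_dirac_cycle_extension[OF assms(1,2) LD] by (auto simp: extendable_12_def)
  have "\<not> card V \<le> Suc 0"
    using assms(3) by simp
  then obtain u v where "u \<in> V" "v \<in> V" "u \<noteq> v"
    using card_le_Suc0_iff_eq[OF simple_graphD(1)[OF assms(1)]] by blast
  then obtain w where "E u w"
    using connected_graph_edge_leaving[OF assms(2), of u "{u}" v] by blast
  then obtain t where "is_cycle V E [u, w, t]"
    using locally_dirac_triangle[OF assms(1) LD] by blast
  then show ?thesis
    using hamiltonian_if_extendable_12 simple_graphD(1)[OF assms(1)] ext by blast
qed

end
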